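(* Suppose a closed $n$-braid $\beta$ can be represented by a braid word containing a factor $\sigma_i^{-1}$ but no factor $\sigma_i$, for some $i\in\{1,\dots,n-1\}$. Then $\kappa(\beta)=2$.
   Context: Work over $\mathbb{Z}/2$ with the Khovanov chain complex $\mathrm{CKh}$ of a link diagram (cube of resolutions, circles labeled $v_\pm$, Khovanov's merge/split differential). For $\beta\in B_n$ with closure $\bar\beta$ drawn around the braid axis, a circle in a resolution is nontrivial if it winds an odd number of times around the axis, trivial otherwise. The $k$-grading of a canonical generator is (number of nontrivial circles labeled $v_+$) minus (number of nontrivial circles labeled $v_-$); the differential does not increase $k$, so $\mathcal{F}_i=\mathrm{span}\{x:k(x)\le i\}$ are subcomplexes. The braidlike resolution ($0$-resolve positive, $1$-resolve negative crossings) has $n$ nontrivial circles; $\psi(\bar\beta)$ labels all of them $v_-$. Define $\kappa(\beta)=n+\min\{i:\psi(\bar\beta)=dy,\ y\in\mathcal{F}_i\}$ if $\psi(\bar\beta)$ is a boundary, $\kappa(\beta)=\infty$ otherwise. *)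

theory Defs
  imports Main "HOL-Library.Extended_Real"
begin

text \<open>A braid word in B_n is a list of letters (i, p): p = True means sigma_i,
  p = False means sigma_i^{-1}; valid letters have 1 <= i <= n-1.
  Strands are numbered 0..n-1 at each level; sigma_i acts on strands i-1 and i.
  Crossing c (c < length w) sits between level c and level (c+1) mod length w
  (closure). Nodes (k, j) are the points of strand j at level k.
  A resolution is the set s of crossings that are 1-resolved.\<close>

type_synonym letter = "nat \<times> bool"
type_synonym node = "nat \<times> nat"

definition nodes :: "nat \<Rightarrow> letter list \<Rightarrow> node set" where
  "nodes n w = {..<length w} \<times> {..<n}"

text \<open>Turnback (cup-cap) smoothing at crossing c: the 1-resolution of a positive
  crossing or the 0-resolution of a negative crossing; otherwise the smoothing is
  the braidlike (vertical) one.\<close>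
definition cross_edges :: "nat \<Rightarrow> letter list \<Rightarrow> nat set \<Rightarrow> nat \<Rightarrow> (node \<times> node) set" where
  "cross_edges n w s c =
    (let i = fst (w ! c); p = snd (w ! c); t = (p = (c \<in> s)); c' = Suc c mod length w in
      {((c, j), (c', j)) | j. j < n \<and> j \<noteq> i - 1 \<and> j \<noteq> i} \<union>
      (if t then {((c, i - 1), (c, i)), ((c', i - 1), (c', i))}
            else {((c, i - 1), (c', i - 1)), ((c, i), (c', i))}))"

definition edges :: "nat \<Rightarrow> letter list \<Rightarrow> nat set \<Rightarrow> (node \<times> node) set" where
  "edges n w s = (\<Union>c\<in>{..<length w}. cross_edges n w s c)"

definition conn :: "nat \<Rightarrow> letter list \<Rightarrow> nat set \<Rightarrow> (node \<times> node) set" where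
  "conn n w s = (edges n w s \<union> (edges n w s)\<inverse>)\<^sup>*"

definition circles :: "nat \<Rightarrow> letter list \<Rightarrow> nat set \<Rightarrow> node set set" where
  "circles n w s = (\<lambda>x. {y. (x, y) \<in> conn n w s}) ` nodes n w"

text \<open>A circle winds an odd number of times around the braid axis iff it meets
  the (generic) horizontal line at level 0 an odd number of times.\<close>
definition nontrivial :: "node set \<Rightarrow> bool" where
  "nontrivial C = odd (card {j. (0, j) \<in> C})"

text \<open>Canonical generators: (s, M), M = set of circles labelled v-, the others v+.\<close>
definition gens :: "nat \<Rightarrow> letter list \<Rightarrow> (nat set \<times> node set set) set" where
  "gens n w = {(s, M). s \<subseteq> {..<length w} \<and> M \<subseteq> circles n w s}"

definition kgr :: "nat \<Rightarrow> letter list \<Rightarrow> nat set \<times> node set set \<Rightarrow> int" where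
  "kgr n w x = (case x of (s, M) \<Rightarrow>
     int (card {C \<in> circles n w s. nontrivial C \<and> C \<notin> M})
     - int (card {C \<in> circles n w s. nontrivial C \<and> C \<in> M}))"

text \<open>Coefficient (over Z/2) of y in the Khovanov differential of x: merge
  (m(v+v+)=v+, m(v+v-)=m(v-v+)=v-, m(v-v-)=0) and split
  (Delta(v+)=v+v- + v-v+, Delta(v-)=v-v-), unchanged circles keep labels.\<close>
definition dcoef :: "nat \<Rightarrow> letter list \<Rightarrow> nat set \<times> node set set \<Rightarrow> nat set \<times> node set set \<Rightarrow> bool" where
  "dcoef n w x y = (case x of (s, M) \<Rightarrow> case y of (s', M') \<Rightarrow>
     (\<exists>c < length w. c \<notin> s \<and> s' = insert c s \<and>
       (let A = circles n w s - circles n w s'; B = circles n w s' - circles n w s in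
         (\<forall>C \<in> circles n w s \<inter> circles n w s'. (C \<in> M) = (C \<in> M')) \<and>
         ((card A = 2 \<and> card B = 1 \<and> card (B \<inter> M') = card (A \<inter> M)) \<or>
          (card A = 1 \<and> card B = 2 \<and> card (B \<inter> M') = card (A \<inter> M) + 1)))))"

text \<open>Chains over Z/2 are finite sets of generators; the differential.\<close>
definition kd :: "nat \<Rightarrow> letter list \<Rightarrow> (nat set \<times> node set set) set \<Rightarrow> (nat set \<times> node set set) set" where
  "kd n w X = {y \<in> gens n w. odd (card {x \<in> X \<inter> gens n w. dcoef n w x y})}"

definition braidlike :: "letter list \<Rightarrow> nat set" where
  "braidlike w = {c. c < length w \<and> \<not> snd (w ! c)}"

definition psi :: "nat \<Rightarrow> letter list \<Rightarrow> nat set \<times> node set set" where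
  "psi n w = (braidlike w, {C \<in> circles n w (braidlike w). nontrivial C})"

definition bounds_in :: "nat \<Rightarrow> letter list \<Rightarrow> int \<Rightarrow> bool" where
  "bounds_in n w i = (\<exists>Y \<subseteq> gens n w. (\<forall>y \<in> Y. kgr n w y \<le> i) \<and> kd n w Y = {psi n w})"

definition kappa :: "nat \<Rightarrow> letter list \<Rightarrow> ereal" where
  "kappa n w = (if \<exists>i. bounds_in n w i
     then ereal (real_of_int (int n + Inf {i. bounds_in n w i})) else \<infinity>)"

end

theory Submission
  imports Defs
begin

text \<open>Let \<open>c\<^sub>0\<close> be a crossing \<open>\<sigma>\<^sub>i\<^sup>-\<^sup>1\<close> and take the resolution that is braidlike
  except at \<open>c\<^sub>0\<close>. There strands \<open>i - 1\<close> and \<open>i\<close> close up into one trivial circle, while the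
  other \<open>n - 2\<close> strands remain nontrivial circles; labelling every circle \<open>v\<^sub>-\<close> gives a generator
  of \<open>k\<close>-grading \<open>2 - n\<close> whose differential is \<open>\<psi>\<close>: changing \<open>c\<^sub>0\<close> splits the trivial circle
  into two strand circles labelled \<open>v\<^sub>-\<close>, and changing any other 0-resolved crossing, which is
  some \<open>\<sigma>\<^sub>j\<close> with \<open>j \<noteq> i\<close>, merges two distinct circles labelled \<open>v\<^sub>-\<close> and so contributes 0.
  Conversely, a chain bounding \<open>\<psi>\<close> contains a generator whose differential hits \<open>\<psi>\<close>; it lives
  in a resolution that is braidlike except at one negative crossing, which has only \<open>n - 2\<close>
  nontrivial circles, so its \<open>k\<close>-grading is at least \<open>2 - n\<close>. Hence \<open>\<kappa> = n + (2 - n) = 2\<close>.\<close>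

lemma conn_refl: "(x, x) \<in> conn n w s"
  unfolding conn_def by blast

lemma conn_sym: "(x, y) \<in> conn n w s \<Longrightarrow> (y, x) \<in> conn n w s"
  unfolding conn_def by (metis converse_Un converse_converse rtrancl_converseI sup_commute)

lemma conn_trans: "(x, y) \<in> conn n w s \<Longrightarrow> (y, z) \<in> conn n w s \<Longrightarrow> (x, z) \<in> conn n w s"
  unfolding conn_def by (meson rtrancl_trans)

lemma edge_in_conn: "(x, y) \<in> edges n w s \<Longrightarrow> (x, y) \<in> conn n w s"
  unfolding conn_def by blast

lemma finite_circles: "finite (circles n w s)"
  by (simp add: circles_def nodes_def)

lemma edge_vertical:
  assumes "k < length w" "a < n" "snd (w ! k) \<noteq> (k \<in> s)"
  shows "((k, a), (Suc k mod length w, a)) \<in> edges n w s"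
  using assms by (auto simp: edges_def cross_edges_def Let_def intro!: bexI[of _ k])

lemma edge_turnback:
  assumes "k < length w" "snd (w ! k) = (k \<in> s)"
  shows "((k, fst (w ! k) - 1), (k, fst (w ! k))) \<in> edges n w s"
  using assms by (auto simp: edges_def cross_edges_def Let_def intro!: bexI[of _ k])

lemma circle_not_preserved:
  assumes "(p, q) \<in> conn n w s'" "(p, q) \<notin> conn n w s"
  shows "{y. (p, y) \<in> conn n w s} \<notin> circles n w s'"
proof
  assume "{y. (p, y) \<in> conn n w s} \<in> circles n w s'"
  then obtain r where K: "{y. (p, y) \<in> conn n w s} = {y. (r, y) \<in> conn n w s'}"
    by (auto simp: circles_def)
  have "(r, p) \<in> conn n w s'" using K conn_refl by blast
  then have "(r, q) \<in> conn n w s'" using assms(1) conn_trans by blast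
  then show False using K assms(2) by blast
qed

lemma dcoef_merge_all_minus:
  assumes "(p, q) \<in> conn n w s'" "(p, q) \<notin> conn n w s" "p \<in> nodes n w" "q \<in> nodes n w"
  shows "\<not> dcoef n w (s, circles n w s) (s', M')"
proof
  assume "dcoef n w (s, circles n w s) (s', M')"
  let ?A = "circles n w s - circles n w s'" and ?B = "circles n w s' - circles n w s"
  have d: "(card ?A = 2 \<and> card ?B = 1 \<and> card (?B \<inter> M') = card (?A \<inter> circles n w s)) \<or>
      (card ?A = 1 \<and> card ?B = 2 \<and> card (?B \<inter> M') = card (?A \<inter> circles n w s) + 1)"
    using \<open>dcoef n w (s, circles n w s) (s', M')\<close> unfolding dcoef_def Let_def prod.case by blast
  let ?K = "\<lambda>x. {y. (x, y) \<in> conn n w s}"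
  have "?K p \<in> circles n w s" "?K q \<in> circles n w s"
    using assms(3,4) by (auto simp: circles_def)
  moreover have "?K p \<notin> circles n w s'" "?K q \<notin> circles n w s'"
    using assms(1,2) conn_sym by (metis circle_not_preserved)+
  moreover have "?K p \<noteq> ?K q" using assms(2) conn_refl by blast
  ultimately have "{?K p, ?K q} \<subseteq> ?A" "card {?K p, ?K q} = 2" by auto
  then have "2 \<le> card ?A" by (metis card_mono finite_Diff finite_circles)
  moreover have "card (?B \<inter> M') \<le> card ?B" by (simp add: card_mono finite_circles)
  moreover have "?A \<inter> circles n w s = ?A" by blast
  ultimately show False using d by simp
qed

lemma dcoef_split_all_minus:
  assumes "c < length w" "c \<notin> s" "M' \<subseteq> circles n w (insert c s)"
    and A: "card (circles n w s - circles n w (insert c s)) = 1"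
    and B: "card (circles n w (insert c s) - circles n w s) = 2"
  shows "dcoef n w (s, circles n w s) (insert c s, M') \<longleftrightarrow> M' = circles n w (insert c s)"
proof -
  let ?A = "circles n w s - circles n w (insert c s)" and ?B = "circles n w (insert c s) - circles n w s"
  have "dcoef n w (s, circles n w s) (insert c s, M') \<longleftrightarrow>
      (\<forall>C \<in> circles n w s \<inter> circles n w (insert c s). (C \<in> circles n w s) = (C \<in> M')) \<and>
      ((card ?A = 2 \<and> card ?B = 1 \<and> card (?B \<inter> M') = card (?A \<inter> circles n w s)) \<or>
       (card ?A = 1 \<and> card ?B = 2 \<and> card (?B \<inter> M') = card (?A \<inter> circles n w s) + 1))"
    using assms(1,2) unfolding dcoef_def Let_def prod.case by blast
  also have "\<dots> \<longleftrightarrow>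
      (\<forall>C \<in> circles n w s \<inter> circles n w (insert c s). C \<in> M') \<and> card (?B \<inter> M') = 2"
    using A B by (simp add: Int_absorb2 numeral_2_eq_2)
  also have "\<dots> \<longleftrightarrow> M' = circles n w (insert c s)"
  proof
    assume M': "(\<forall>C \<in> circles n w s \<inter> circles n w (insert c s). C \<in> M') \<and> card (?B \<inter> M') = 2"
    have "finite ?B" by (simp add: finite_circles)
    then have "?B \<inter> M' = ?B" using M' B by (intro card_subset_eq) auto
    then show "M' = circles n w (insert c s)" using M' assms(3) by blast
  next
    assume "M' = circles n w (insert c s)"
    moreover have "?B \<inter> circles n w (insert c s) = ?B" by blast
    ultimately show "(\<forall>C \<in> circles n w s \<inter> circles n w (insert c s). C \<in> M') \<and> card (?B \<inter> M') = 2"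
      using B by simp
  qed
  finally show ?thesis .
qed

lemma kd_singleton: "x \<in> gens n w \<Longrightarrow> kd n w {x} = {y \<in> gens n w. dcoef n w x y}"
proof -
  assume "x \<in> gens n w"
  then have "{x' \<in> {x} \<inter> gens n w. dcoef n w x' y} = (if dcoef n w x y then {x} else {})" for y
    by auto
  then show ?thesis unfolding kd_def by auto
qed

definition strand_circle :: "nat \<Rightarrow> nat \<Rightarrow> node set" where
  "strand_circle L a = {(k, b). k < L \<and> b = a}"

definition turnback_circle :: "nat \<Rightarrow> nat \<Rightarrow> node set" where
  "turnback_circle L j = {(k, b). k < L \<and> (b = j - 1 \<or> b = j)}"

lemma nontrivial_strand_circle: "0 < L \<Longrightarrow> nontrivial (strand_circle L a)"
proof -
  assume "0 < L"
  then have "{b. (0, b) \<in> strand_circle L a} = {a}" by (auto simp: strand_circle_def)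
  then show ?thesis by (simp add: nontrivial_def)
qed

lemma trivial_turnback_circle: "0 < L \<Longrightarrow> 1 \<le> j \<Longrightarrow> \<not> nontrivial (turnback_circle L j)"
proof -
  assume "0 < L" "1 \<le> j"
  then have "{b. (0, b) \<in> turnback_circle L j} = {j - 1, j}" by (auto simp: turnback_circle_def)
  then show ?thesis using \<open>1 \<le> j\<close> by (simp add: nontrivial_def)
qed

lemma strand_circle_inject: "0 < L \<Longrightarrow> strand_circle L a = strand_circle L b \<longleftrightarrow> a = b"
  by (auto simp: strand_circle_def set_eq_iff)

lemma strand_circle_neq_turnback_circle:
  assumes "0 < L" "1 \<le> j"
  shows "strand_circle L a \<noteq> turnback_circle L j"
proof
  assume "strand_circle L a = turnback_circle L j"
  then have "(0, j - 1) \<in> strand_circle L a" "(0, j) \<in> strand_circle L a"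
    using assms by (auto simp: turnback_circle_def)
  then show False using assms(2) by (auto simp: strand_circle_def)
qed

text \<open>In a resolution whose only turnback smoothing is at crossing \<open>e\<close>, the circle through
  strand \<open>a\<close> is determined by \<open>strand_block w e a\<close>; any \<open>e \<ge> length w\<close> stands for the braidlike
  resolution, which has no turnback at all.\<close>
definition strand_block :: "letter list \<Rightarrow> nat \<Rightarrow> nat \<Rightarrow> nat" where
  "strand_block w e a =
    (if e < length w \<and> (a = fst (w ! e) - 1 \<or> a = fst (w ! e)) then fst (w ! e) else a)"

locale braid_closure =
  fixes n :: nat and w :: "letter list"
  assumes letters_valid: "\<forall>l \<in> set w. 1 \<le> fst l \<and> fst l < n"
    and word_nonempty: "0 < length w"
begin

lemma letter_bounds: "k < length w \<Longrightarrow> 1 \<le> fst (w ! k) \<and> fst (w ! k) < n"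
  using letters_valid nth_mem by blast

end

locale turnback_resolution = braid_closure +
  fixes s :: "nat set" and e :: nat
  assumes braidlike_off_e: "\<And>k. k < length w \<Longrightarrow> k \<noteq> e \<Longrightarrow> snd (w ! k) \<noteq> (k \<in> s)"
    and turnback_at_e: "e < length w \<Longrightarrow> snd (w ! e) = (e \<in> s)"
begin

lemma edge_preserves_block:
  assumes "(x, y) \<in> edges n w s"
  shows "x \<in> nodes n w \<and> y \<in> nodes n w \<and> strand_block w e (snd x) = strand_block w e (snd y)"
proof -
  obtain k where k: "k < length w" "(x, y) \<in> cross_edges n w s k"
    using assms by (auto simp: edges_def)
  let ?i = "fst (w ! k)"
  have "Suc k mod length w < length w" using word_nonempty by simp
  then have nodes: "x \<in> nodes n w \<and> y \<in> nodes n w"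
    using k letter_bounds[OF k(1)] by (auto simp: cross_edges_def Let_def nodes_def split: if_splits)
  have "snd x = snd y \<or> (snd (w ! k) = (k \<in> s) \<and> snd x \<in> {?i - 1, ?i} \<and> snd y \<in> {?i - 1, ?i})"
    using k(2) by (auto simp: cross_edges_def Let_def split: if_splits)
  moreover have "snd (w ! k) = (k \<in> s) \<Longrightarrow> k = e"
    using braidlike_off_e[OF k(1)] by blast
  ultimately show ?thesis using nodes k(1) by (auto simp: strand_block_def)
qed

lemma conn_imp_same_block:
  assumes "(x, y) \<in> conn n w s" "x \<in> nodes n w"
  shows "y \<in> nodes n w \<and> strand_block w e (snd y) = strand_block w e (snd x)"
  using assms(1) unfolding conn_def
proof (induction rule: rtrancl_induct)
  case base
  then show ?case using assms(2) by simp
next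
  case (step y z)
  then show ?case using edge_preserves_block by fastforce
qed

lemma strand_path:
  assumes "k \<le> k'" "k' < length w" "a < n" "e \<notin> {k..<k'}"
  shows "((k, a), (k', a)) \<in> conn n w s"
  using assms
proof (induction k' rule: dec_induct)
  case base
  show ?case by (rule conn_refl)
next
  case (step m)
  have "((m, a), (Suc m mod length w, a)) \<in> conn n w s"
    using step braidlike_off_e by (intro edge_in_conn edge_vertical) auto
  moreover have "((k, a), (m, a)) \<in> conn n w s" using step by auto
  moreover have "Suc m mod length w = Suc m" using step by simp
  ultimately show ?case by (metis conn_trans)
qed

lemma strand_connected:
  assumes "k < length w" "a < n"
  shows "((0, a), (k, a)) \<in> conn n w s"
proof (cases "k \<le> e")
  case True
  then show ?thesis using assms by (intro strand_path) auto
next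
  case False
  let ?l = "length w - 1"
  have "((k, a), (?l, a)) \<in> conn n w s" using False assms by (intro strand_path) auto
  moreover have "((?l, a), (Suc ?l mod length w, a)) \<in> conn n w s"
    using False assms braidlike_off_e by (intro edge_in_conn edge_vertical) auto
  ultimately have "((k, a), (0, a)) \<in> conn n w s" using word_nonempty conn_trans by simp
  then show ?thesis by (rule conn_sym)
qed

lemma same_strand_connected:
  assumes "k < length w" "k' < length w" "a < n"
  shows "((k, a), (k', a)) \<in> conn n w s"
  using strand_connected[OF assms(1,3)] strand_connected[OF assms(2,3)] conn_sym conn_trans by blast

lemma same_block_imp_conn:
  assumes x: "x \<in> nodes n w" and y: "y \<in> nodes n w"
    and block: "strand_block w e (snd x) = strand_block w e (snd y)"
  shows "(x, y) \<in> conn n w s"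
proof -
  obtain k a k' b where xy: "x = (k, a)" "y = (k', b)" "k < length w" "k' < length w" "a < n" "b < n"
    using x y by (auto simp: nodes_def)
  show ?thesis
  proof (cases "a = b")
    case True
    then show ?thesis using xy same_strand_connected by simp
  next
    case False
    let ?j = "fst (w ! e)"
    have e: "e < length w" and ab: "a \<in> {?j - 1, ?j}" "b \<in> {?j - 1, ?j}"
      using block False xy by (auto simp: strand_block_def split: if_splits)
    have "((e, ?j - 1), (e, ?j)) \<in> conn n w s"
      using e turnback_at_e by (intro edge_in_conn edge_turnback)
    then have "((e, a), (e, b)) \<in> conn n w s"
      using ab False conn_sym by auto
    then show ?thesis
      using xy e same_strand_connected[of k e a] same_strand_connected[of e k' b] conn_trans by blast
  qed
qed

lemma conn_iff_same_block:
  assumes "x \<in> nodes n w"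
  shows "(x, y) \<in> conn n w s \<longleftrightarrow> y \<in> nodes n w \<and> strand_block w e (snd y) = strand_block w e (snd x)"
  using assms conn_imp_same_block same_block_imp_conn by metis

lemma circles_eq:
  "circles n w s = (\<lambda>a. {y \<in> nodes n w. strand_block w e (snd y) = strand_block w e a}) ` {..<n}"
proof -
  have "{y. (x, y) \<in> conn n w s} = {y \<in> nodes n w. strand_block w e (snd y) = strand_block w e (snd x)}"
    if "x \<in> nodes n w" for x
    using conn_iff_same_block[OF that] by blast
  moreover have "nodes n w = {0..<length w} \<times> {..<n}" by (auto simp: nodes_def)
  ultimately show ?thesis
    using word_nonempty unfolding circles_def by (force simp: image_iff)
qed

lemma adjacent_strands_disconnected:
  assumes "k < length w" "1 \<le> j" "j < n" "e < length w \<Longrightarrow> j \<noteq> fst (w ! e)"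
  shows "((k, j - 1), (k, j)) \<notin> conn n w s"
proof -
  have "strand_block w e j \<noteq> strand_block w e (j - 1)"
    using assms(2,4) by (auto simp: strand_block_def)
  then show ?thesis using assms(1,3) conn_iff_same_block by (simp add: nodes_def)
qed

end

context braid_closure
begin

lemma circles_braidlike: "circles n w (braidlike w) = strand_circle (length w) ` {..<n}"
proof -
  interpret turnback_resolution n w "braidlike w" "length w"
    by unfold_locales (auto simp: braidlike_def)
  show ?thesis unfolding circles_eq
    by (intro image_cong) (auto simp: strand_block_def strand_circle_def nodes_def)
qed

lemma psi_eq: "psi n w = (braidlike w, circles n w (braidlike w))"
  using circles_braidlike nontrivial_strand_circle word_nonempty by (auto simp: psi_def)

lemma circles_one_turnback:
  assumes "c < length w" "\<not> snd (w ! c)"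
  defines "j \<equiv> fst (w ! c)"
  shows "circles n w (braidlike w - {c}) =
    insert (turnback_circle (length w) j) (strand_circle (length w) ` ({..<n} - {j - 1, j}))"
proof -
  interpret turnback_resolution n w "braidlike w - {c}" c
    by unfold_locales (use assms in \<open>auto simp: braidlike_def\<close>)
  have j: "1 \<le> j" "j < n" using letter_bounds[OF assms(1)] by (simp_all add: j_def)
  have "{y \<in> nodes n w. strand_block w c (snd y) = strand_block w c a} =
      (if a \<in> {j - 1, j} then turnback_circle (length w) j else strand_circle (length w) a)"
    if "a < n" for a
    using that j assms(1) by (auto simp: strand_block_def j_def turnback_circle_def strand_circle_def nodes_def)
  then have "circles n w (braidlike w - {c}) =
      (\<lambda>a. if a \<in> {j - 1, j} then turnback_circle (length w) j else strand_circle (length w) a) ` {..<n}"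
    unfolding circles_eq by (intro image_cong) auto
  also have "\<dots> = insert (turnback_circle (length w) j) (strand_circle (length w) ` ({..<n} - {j - 1, j}))"
    using j by (auto simp: image_iff intro: bexI[of _ j])
  finally show ?thesis .
qed

lemma card_nontrivial_circles_one_turnback:
  assumes "c < length w" "\<not> snd (w ! c)"
  shows "card {C \<in> circles n w (braidlike w - {c}). nontrivial C} = n - 2"
proof -
  let ?L = "length w" and ?j = "fst (w ! c)"
  have j: "1 \<le> ?j" "?j < n" using letter_bounds[OF assms(1)] by simp_all
  have "{C \<in> circles n w (braidlike w - {c}). nontrivial C} = strand_circle ?L ` ({..<n} - {?j - 1, ?j})"
    using circles_one_turnback[OF assms] trivial_turnback_circle[OF word_nonempty j(1)]
      nontrivial_strand_circle[OF word_nonempty] by auto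
  moreover have "inj_on (strand_circle ?L) ({..<n} - {?j - 1, ?j})"
    using strand_circle_inject[OF word_nonempty] by (auto simp: inj_on_def)
  moreover have "card ({..<n} - {?j - 1, ?j}) = n - 2" using j by (subst card_Diff_subset) auto
  ultimately show ?thesis by (simp add: card_image)
qed

lemma kgr_one_turnback_ge:
  assumes "c < length w" "\<not> snd (w ! c)"
  shows "2 - int n \<le> kgr n w (braidlike w - {c}, M)"
proof -
  let ?s = "braidlike w - {c}"
  have "card {C \<in> circles n w ?s. nontrivial C \<and> C \<in> M} \<le> card {C \<in> circles n w ?s. nontrivial C}"
    by (rule card_mono) (auto simp: finite_circles)
  moreover have "2 \<le> n" using letter_bounds[OF assms(1)] by simp
  ultimately show ?thesis using card_nontrivial_circles_one_turnback[OF assms] by (simp add: kgr_def)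
qed

lemma kgr_one_turnback_all_minus:
  assumes "c < length w" "\<not> snd (w ! c)"
  shows "kgr n w (braidlike w - {c}, circles n w (braidlike w - {c})) = 2 - int n"
proof -
  let ?X = "circles n w (braidlike w - {c})"
  have "{C \<in> ?X. nontrivial C \<and> C \<notin> ?X} = {}" by blast
  then have "card {C \<in> ?X. nontrivial C \<and> C \<notin> ?X} = 0" by (simp only: card.empty)
  moreover have "{C \<in> ?X. nontrivial C \<and> C \<in> ?X} = {C \<in> ?X. nontrivial C}" by blast
  moreover have "2 \<le> n" using letter_bounds[OF assms(1)] by simp
  ultimately show ?thesis using card_nontrivial_circles_one_turnback[OF assms] by (simp add: kgr_def)
qed

lemma bounds_in_ge:
  assumes "bounds_in n w k"
  shows "2 - int n \<le> k"
proof -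
  obtain Y where Y: "\<forall>y \<in> Y. kgr n w y \<le> k" "kd n w Y = {psi n w}"
    using assms by (auto simp: bounds_in_def)
  then have "odd (card {x \<in> Y \<inter> gens n w. dcoef n w x (psi n w)})" by (auto simp: kd_def)
  then have "{x \<in> Y \<inter> gens n w. dcoef n w x (psi n w)} \<noteq> {}" by (metis odd_card_imp_not_empty)
  then obtain s M where y: "(s, M) \<in> Y" "dcoef n w (s, M) (psi n w)" by auto
  then obtain c where c: "c < length w" "c \<notin> s" "braidlike w = insert c s"
    by (auto simp: dcoef_def psi_def)
  then have "s = braidlike w - {c}" "\<not> snd (w ! c)" by (auto simp: braidlike_def)
  then show ?thesis using kgr_one_turnback_ge[OF c(1)] Y(1) y(1) by (metis order_trans)
qed

lemma card_circles_one_turnback_diff: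
  assumes "c < length w" "\<not> snd (w ! c)"
  defines "j \<equiv> fst (w ! c)"
  shows "card (circles n w (braidlike w - {c}) - circles n w (braidlike w)) = 1"
    and "card (circles n w (braidlike w) - circles n w (braidlike w - {c})) = 2"
proof -
  let ?L = "length w"
  have j: "1 \<le> j" "j < n" using letter_bounds[OF assms(1)] by (simp_all add: j_def)
  have ne: "strand_circle ?L a \<noteq> turnback_circle ?L j" for a
    using strand_circle_neq_turnback_circle[OF word_nonempty j(1)] .
  have inj: "strand_circle ?L a = strand_circle ?L b \<longleftrightarrow> a = b" for a b
    using strand_circle_inject[OF word_nonempty] .
  have "circles n w (braidlike w - {c}) - circles n w (braidlike w) = {turnback_circle ?L j}"
    unfolding circles_one_turnback[OF assms(1,2)] circles_braidlike j_def[symmetric] using ne by auto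
  then show "card (circles n w (braidlike w - {c}) - circles n w (braidlike w)) = 1" by simp
  have "circles n w (braidlike w) - circles n w (braidlike w - {c}) =
      {strand_circle ?L (j - 1), strand_circle ?L j}"
    unfolding circles_one_turnback[OF assms(1,2)] circles_braidlike j_def[symmetric]
    using ne inj j by auto
  moreover have "strand_circle ?L (j - 1) \<noteq> strand_circle ?L j" using inj j(1) by simp
  ultimately show "card (circles n w (braidlike w) - circles n w (braidlike w - {c})) = 2" by simp
qed

lemma dcoef_one_turnback_iff:
  assumes c0: "c0 < length w" "w ! c0 = (i, False)" and no_positive: "(i, True) \<notin> set w"
    and y: "y \<in> gens n w"
  shows "dcoef n w (braidlike w - {c0}, circles n w (braidlike w - {c0})) y \<longleftrightarrow> y = psi n w"
proof -
  let ?s0 = "braidlike w - {c0}"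
  have neg: "\<not> snd (w ! c0)" using c0(2) by simp
  have bl: "braidlike w = insert c0 ?s0" using c0 by (auto simp: braidlike_def)
  have split: "dcoef n w (?s0, circles n w ?s0) (braidlike w, M) \<longleftrightarrow> M = circles n w (braidlike w)"
    if "M \<subseteq> circles n w (braidlike w)" for M
    using dcoef_split_all_minus[where c = c0 and s = ?s0 and M' = M] card_circles_one_turnback_diff[OF c0(1) neg] c0(1) that bl
    by simp
  obtain s' M' where y': "y = (s', M')" "M' \<subseteq> circles n w s'" using y by (auto simp: gens_def)
  show ?thesis
  proof
    assume d: "dcoef n w (?s0, circles n w ?s0) y"
    then obtain c where c: "c < length w" "c \<notin> ?s0" "s' = insert c ?s0"
      unfolding y' dcoef_def by blast
    show "y = psi n w"
    proof (cases "c = c0")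
      case True
      then show ?thesis using d split y' c(3) bl psi_eq by simp
    next
      case False
      then have pos: "snd (w ! c)" using c by (auto simp: braidlike_def)
      let ?j = "fst (w ! c)"
      interpret turnback_resolution n w ?s0 c0
        by unfold_locales (use c0 in \<open>auto simp: braidlike_def\<close>)
      have "w ! c = (?j, True)" using pos by (metis prod.collapse)
      then have "?j \<noteq> i" using no_positive c(1) nth_mem by metis
      then have "((c, ?j - 1), (c, ?j)) \<notin> conn n w ?s0"
        using adjacent_strands_disconnected c(1) letter_bounds[OF c(1)] c0(2) by simp
      moreover have "((c, ?j - 1), (c, ?j)) \<in> conn n w s'"
        using c pos by (intro edge_in_conn edge_turnback) auto
      ultimately show ?thesis
        using d dcoef_merge_all_minus c(1) letter_bounds[OF c(1)] unfolding y'
        by (auto simp: nodes_def)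
    qed
  next
    assume "y = psi n w"
    then show "dcoef n w (?s0, circles n w ?s0) y" using split psi_eq by simp
  qed
qed

lemma bounds_in_one_turnback:
  assumes c0: "c0 < length w" "w ! c0 = (i, False)" and no_positive: "(i, True) \<notin> set w"
  shows "bounds_in n w (2 - int n)"
proof -
  let ?x = "(braidlike w - {c0}, circles n w (braidlike w - {c0}))"
  have neg: "\<not> snd (w ! c0)" using c0(2) by simp
  have x: "?x \<in> gens n w" by (auto simp: gens_def braidlike_def)
  have "psi n w \<in> gens n w" using psi_eq by (auto simp: gens_def braidlike_def)
  then have "kd n w {?x} = {psi n w}"
    using kd_singleton[OF x] dcoef_one_turnback_iff[OF c0 no_positive] by blast
  then show ?thesis
    using x kgr_one_turnback_all_minus[OF c0(1) neg] unfolding bounds_in_def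
    by (intro exI[of _ "{?x}"]) auto
qed

end

theorem mainTheorem7:
  fixes n :: nat and w :: "(nat \<times> bool) list" and i :: nat
  assumes "\<forall>l \<in> set w. 1 \<le> fst l \<and> fst l < n"
    and "1 \<le> i" and "i < n"
    and "(i, False) \<in> set w" and "(i, True) \<notin> set w"
  shows "kappa n w = 2"
proof -
  obtain c0 where c0: "c0 < length w" "w ! c0 = (i, False)"
    using assms(4) by (metis in_set_conv_nth)
  interpret braid_closure n w
    using assms(1) c0(1) by unfold_locales auto
  have least: "bounds_in n w (2 - int n)"
    using bounds_in_one_turnback[OF c0 assms(5)] .
  then have "Inf {k. bounds_in n w k} = 2 - int n"
    using bounds_in_ge by (intro cInf_eq_minimum) auto
  then show ?thesis using least unfolding kappa_def by auto
qed

end
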